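(* Let $\varepsilon>0$ be fixed, $d$ a sufficiently large constant (depending on $\varepsilon$) and $q\ge(2+\varepsilon)d$. For integers $n\ge d$ and $L\ge1$, let $X\sim\mathrm{Bin}(n,d/n)$ and let $X_1,X_2,\dots$ be independent random variables where, for $i\le L$, $X_i$ is distributed as $X$, and for $i>L$, $X_i$ is distributed as $X\cdot\mathbf{1}[X\ge(q-5)/2]$. Let $Y_0=L$ and $Y_i=Y_{i-1}+X_i-1$ for $i\ge1$. Then there exist constants $C_1,C_2>0$ depending only on $d$ and $\varepsilon$ such that for all $n$, $L$ and $t\ge0$, $$\Pr[Y_t\ge0]\le\exp(-C_1t+C_2L).$$ *)

theory Defs
  imports "HOL-Probability.Probability"
begin

definition Xlaw :: "nat \<Rightarrow> real \<Rightarrow> nat \<Rightarrow> nat \<Rightarrow> nat \<Rightarrow> nat pmf" where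
  "Xlaw n d q L i =
     (if i \<le> L then binomial_pmf n (d / real n)
      else map_pmf (\<lambda>x. if real x \<ge> (real q - 5) / 2 then x else 0) (binomial_pmf n (d / real n)))"

definition Ylaw :: "nat \<Rightarrow> real \<Rightarrow> nat \<Rightarrow> nat \<Rightarrow> nat \<Rightarrow> int pmf" where
  "Ylaw n d q L t =
     map_pmf (\<lambda>X. int L + (\<Sum>i\<in>{1..t}. int (X i) - 1)) (Pi_pmf {1..t} 0 (Xlaw n d q L))"

end

theory Submission
  imports Defs
begin

text \<open>For a small \<open>l > 0\<close>, Markov's inequality and independence give
  \<open>P[Y\<^sub>t \<ge> 0] \<le> exp (l L) \<Prod>\<^sub>i E[exp (l (X\<^sub>i - 1))]\<close>. Each of the first \<open>L\<close> factors is at most the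
  binomial moment \<open>exp (d (e\<^sup>l - 1))\<close>. For \<open>i > L\<close> the truncation threshold \<open>(q - 5)/2\<close> exceeds
  \<open>(1 + \<delta>) d\<close>, so \<open>X\<^sub>i\<close> is either \<open>0\<close> or in the Chernoff upper tail of the binomial; its moment is
  \<open>1 + exp (-\<Omega>(\<delta>\<^sup>2 d))\<close>, and once \<open>d\<close> is large the factor \<open>exp (-l)\<close> wins: the factor is
  at most \<open>exp (-l/2)\<close>.\<close>

lemma prob_nonneg_le_exp_moment:
  fixes M :: "'a pmf" and Z :: "'a \<Rightarrow> real"
  assumes "finite (set_pmf M)" and "l \<ge> 0"
  shows "measure_pmf.prob M {x. Z x \<ge> 0} \<le> measure_pmf.expectation M (\<lambda>x. exp (l * Z x))"
proof -
  have "measure_pmf.prob M {x. Z x \<ge> 0} \<le> measure_pmf.prob M {x \<in> space M. exp (l * Z x) \<ge> 1}"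
    using assms(2) by (intro measure_pmf.finite_measure_mono) auto
  also have "\<dots> \<le> measure_pmf.expectation M (\<lambda>x. exp (l * Z x)) / 1"
    by (intro integral_Markov_inequality_measure integrable_measure_pmf_finite assms(1)) auto
  finally show ?thesis by simp
qed

lemma Pi_pmf_prob_sum_nonneg_le:
  fixes M :: "'i \<Rightarrow> 'a pmf" and g :: "'i \<Rightarrow> 'a \<Rightarrow> real"
  assumes "finite I" and "l \<ge> 0" and "\<And>i. i \<in> I \<Longrightarrow> finite (set_pmf (M i))"
  shows "measure_pmf.prob (Pi_pmf I dflt M) {X. c + (\<Sum>i\<in>I. g i (X i)) \<ge> 0}
     \<le> exp (l * c) * (\<Prod>i\<in>I. measure_pmf.expectation (M i) (\<lambda>x. exp (l * g i x)))"
proof -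
  have "finite (set_pmf (Pi_pmf I dflt M))"
    using assms by (subst set_Pi_pmf) (auto intro!: finite_PiE_dflt)
  moreover have "exp (l * (c + (\<Sum>i\<in>I. g i (X i)))) = exp (l * c) * (\<Prod>i\<in>I. exp (l * g i (X i)))" for X
    using assms(1) by (simp add: distrib_left sum_distrib_left exp_add exp_sum)
  ultimately have "measure_pmf.prob (Pi_pmf I dflt M) {X. c + (\<Sum>i\<in>I. g i (X i)) \<ge> 0}
      \<le> measure_pmf.expectation (Pi_pmf I dflt M) (\<lambda>X. exp (l * c) * (\<Prod>i\<in>I. exp (l * g i (X i))))"
    using prob_nonneg_le_exp_moment[OF _ assms(2), of _ "\<lambda>X. c + (\<Sum>i\<in>I. g i (X i))"]
    by presburger
  also have "\<dots> = exp (l * c) * (\<Prod>i\<in>I. measure_pmf.expectation (M i) (\<lambda>x. exp (l * g i x)))"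
    using assms by (simp add: expectation_prod_Pi_pmf[of I M "\<lambda>i x. exp (l * g i x)"]
        integrable_measure_pmf_finite)
  finally show ?thesis .
qed

lemma prod_le_exp_initial_segment:
  fixes f :: "nat \<Rightarrow> real"
  assumes f: "\<And>i. i \<in> {1..t} \<Longrightarrow> 0 \<le> f i \<and> f i \<le> exp (- a + (if i \<le> L then b else 0))"
    and "b \<ge> 0"
  shows "(\<Prod>i\<in>{1..t}. f i) \<le> exp (- a * real t + b * real L)"
proof -
  have "card {i \<in> {1..t}. i \<le> L} \<le> card {1..L}"
    by (intro card_mono) auto
  then have card: "b * real (card {i \<in> {1..t}. i \<le> L}) \<le> b * real L"
    using \<open>b \<ge> 0\<close> by (intro mult_left_mono) auto
  have "(\<Prod>i\<in>{1..t}. f i) \<le> (\<Prod>i\<in>{1..t}. exp (- a + (if i \<le> L then b else 0)))"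
    using f by (intro prod_mono) auto
  also have "\<dots> = exp (- a * real t + (\<Sum>i\<in>{1..t}. if i \<le> L then b else 0))"
    by (simp add: exp_sum[symmetric] sum_subtractf)
  also have "(\<Sum>i\<in>{1..t}. if i \<le> L then b else 0) = b * real (card {i \<in> {1..t}. i \<le> L})"
    by (simp add: sum.If_cases Int_def conj_commute)
  finally show ?thesis
    using card by (smt (verit) exp_le_cancel_iff)
qed

lemma binomial_pmf_mgf:
  assumes "p \<in> {0..1}"
  shows "measure_pmf.expectation (binomial_pmf n p) (\<lambda>x. exp (\<mu> * real x)) = (1 - p + p * exp \<mu>) ^ n"
proof -
  have "measure_pmf.expectation (binomial_pmf n p) (\<lambda>x. exp (\<mu> * real x))
      = (\<Sum>k\<le>n. real (n choose k) * (p * exp \<mu>) ^ k * (1 - p) ^ (n - k))"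
    using assms by (simp add: expectation_binomial_pmf' exp_of_nat_mult[symmetric] power_mult_distrib mult_ac)
  also have "\<dots> = (p * exp \<mu> + (1 - p)) ^ n"
    by (simp add: binomial_ring)
  finally show ?thesis by (simp add: add.commute)
qed

lemma binomial_pmf_mgf_le:
  assumes "p \<in> {0..1}"
  shows "measure_pmf.expectation (binomial_pmf n p) (\<lambda>x. exp (\<mu> * real x)) \<le> exp (real n * p * (exp \<mu> - 1))"
proof -
  have "0 \<le> 1 - p + p * exp \<mu>"
    using assms by (auto intro!: add_nonneg_nonneg)
  then have "(1 - p + p * exp \<mu>) ^ n \<le> exp (p * (exp \<mu> - 1)) ^ n"
    using exp_ge_add_one_self[of "p * (exp \<mu> - 1)"] by (intro power_mono) (auto simp: algebra_simps)
  also have "\<dots> = exp (real n * p * (exp \<mu> - 1))"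
    by (simp add: exp_of_nat_mult[symmetric] mult_ac)
  finally show ?thesis
    using binomial_pmf_mgf[OF assms] by simp
qed

text \<open>On the event \<open>x \<ge> k'\<close>, \<open>exp (l x) \<le> exp ((l - \<mu>) k) exp (\<mu> x)\<close>, so the truncated moment at
  \<open>l\<close> is controlled by the untruncated moment at \<open>\<mu>\<close>.\<close>
lemma truncated_binomial_pmf_mgf_le:
  assumes p: "p \<in> {0..1}" and "0 \<le> l" "l \<le> \<mu>" and "k \<le> k'"
  shows "measure_pmf.expectation (map_pmf (\<lambda>x. if real x \<ge> k' then x else 0) (binomial_pmf n p))
           (\<lambda>x. exp (l * real x))
         \<le> 1 + exp (real n * p * (exp \<mu> - 1) - (\<mu> - l) * k)"
proof -
  have pointwise: "exp (l * real (if real x \<ge> k' then x else 0)) \<le> 1 + exp (- (\<mu> - l) * k) * exp (\<mu> * real x)"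
    for x :: nat
  proof (cases "real x \<ge> k'")
    case True
    have "(\<mu> - l) * k \<le> (\<mu> - l) * real x"
      using True assms by (intro mult_left_mono) auto
    then have "exp (l * real x) \<le> exp (- (\<mu> - l) * k) * exp (\<mu> * real x)"
      by (simp add: exp_add[symmetric] algebra_simps)
    then show ?thesis
      using True by (simp add: add_increasing)
  qed (simp add: add_increasing)
  have "measure_pmf.expectation (map_pmf (\<lambda>x. if real x \<ge> k' then x else 0) (binomial_pmf n p))
          (\<lambda>x. exp (l * real x))
      = measure_pmf.expectation (binomial_pmf n p) (\<lambda>x. exp (l * real (if real x \<ge> k' then x else 0)))"
    by simp
  also have "\<dots> \<le> measure_pmf.expectation (binomial_pmf n p) (\<lambda>x. 1 + exp (- (\<mu> - l) * k) * exp (\<mu> * real x))"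
    using p by (intro integral_mono pointwise) auto
  also have "\<dots> = 1 + exp (- (\<mu> - l) * k) * measure_pmf.expectation (binomial_pmf n p) (\<lambda>x. exp (\<mu> * real x))"
    using p by (simp add: Bochner_Integration.integral_add)
  also have "\<dots> \<le> 1 + exp (- (\<mu> - l) * k) * exp (real n * p * (exp \<mu> - 1))"
    using binomial_pmf_mgf_le[OF p] by (intro add_left_mono mult_left_mono) auto
  also have "\<dots> = 1 + exp (real n * p * (exp \<mu> - 1) - (\<mu> - l) * k)"
    by (simp add: exp_add[symmetric] algebra_simps)
  finally show ?thesis .
qed

lemma exp_neg_mult_one_plus_exp_neg_le:
  fixes l x :: real
  assumes "l > 0" and "2 / l \<le> x"
  shows "exp (- l) * (1 + exp (- x)) \<le> exp (- l / 2)"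
proof -
  have "x > 0"
    using assms by (smt (verit) divide_pos_pos)
  have "x \<le> exp x"
    using exp_ge_add_one_self[of x] by linarith
  then have "exp (- x) \<le> 1 / x"
    using \<open>x > 0\<close> by (simp add: exp_minus inverse_eq_divide divide_left_mono)
  also have "\<dots> \<le> l / 2"
    using assms \<open>x > 0\<close> by (simp add: field_simps)
  finally have "1 + exp (- x) \<le> exp (l / 2)"
    using exp_ge_add_one_self[of "l / 2"] by linarith
  then have "exp (- l) * (1 + exp (- x)) \<le> exp (- l) * exp (l / 2)"
    by simp
  also have "\<dots> = exp (- l / 2)"
    by (simp add: exp_add[symmetric])
  finally show ?thesis .
qed

lemma truncated_binomial_pmf_step_mgf_le:
  assumes p: "p \<in> {0..1}" and \<delta>: "0 < \<delta>" "\<delta> \<le> 1"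
    and l: "l > 0" "l * (1 + \<delta>) \<le> \<delta>\<^sup>2 / 8"
    and mean_large: "16 / (\<delta>\<^sup>2 * l) \<le> real n * p"
    and threshold: "(1 + \<delta>) * (real n * p) \<le> k"
  shows "measure_pmf.expectation (map_pmf (\<lambda>x. if real x \<ge> k then x else 0) (binomial_pmf n p))
           (\<lambda>x. exp (l * (real x - 1)))
         \<le> exp (- l / 2)"
proof -
  define m where "m = real n * p"
  define \<mu> where "\<mu> = \<delta> / 2"
  define x where "x = m * \<delta>\<^sup>2 / 8"
  have "l \<le> \<delta>\<^sup>2 / 8"
    using l \<delta> by (smt (verit) mult_le_cancel_left1)
  also have "\<dots> \<le> \<mu>"
    using \<delta> by (simp add: \<mu>_def power2_eq_square mult_le_cancel_right1)
  finally have "l \<le> \<mu>" .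
  have "0 < 16 / (\<delta>\<^sup>2 * l)"
    using \<delta> l by simp
  then have m: "m > 0"
    using mean_large unfolding m_def by linarith
  have "16 \<le> m * (\<delta>\<^sup>2 * l)"
    using mean_large \<delta> l by (simp add: m_def pos_divide_le_eq)
  then have x: "2 / l \<le> x"
    using \<delta> l m by (auto simp: x_def pos_divide_le_eq mult_ac)
  \<comment> \<open>\<open>exp \<mu> - 1 \<le> \<mu> + \<mu>\<^sup>2\<close> turns the Chernoff exponent into \<open>m (l (1 + \<delta>) - \<delta>\<^sup>2/4) \<le> -x\<close>.\<close>
  have "exp \<mu> \<le> 1 + \<mu> + \<mu>\<^sup>2"
    using exp_bound[of \<mu>] \<delta> by (simp add: \<mu>_def)
  then have "m * (exp \<mu> - 1) - (\<mu> - l) * k \<le> m * (\<mu> + \<mu>\<^sup>2) - (\<mu> - l) * ((1 + \<delta>) * m)"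
    using m \<open>l \<le> \<mu>\<close> threshold by (intro diff_mono mult_left_mono) (auto simp: m_def)
  also have "\<dots> = m * (l * (1 + \<delta>) - \<delta>\<^sup>2 / 4)"
    by (simp add: \<mu>_def power2_eq_square algebra_simps)
  also have "\<dots> \<le> m * (\<delta>\<^sup>2 / 8 - \<delta>\<^sup>2 / 4)"
    using l m by (intro mult_left_mono) auto
  also have "\<dots> = - x"
    by (simp add: x_def)
  finally have exponent: "m * (exp \<mu> - 1) - (\<mu> - l) * k \<le> - x" .
  have "measure_pmf.expectation (map_pmf (\<lambda>x. if real x \<ge> k then x else 0) (binomial_pmf n p))
          (\<lambda>x. exp (l * (real x - 1)))
      = exp (- l) * measure_pmf.expectation (map_pmf (\<lambda>x. if real x \<ge> k then x else 0) (binomial_pmf n p))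
          (\<lambda>x. exp (l * real x))"
    by (simp flip: integral_mult_right_zero add: exp_add[symmetric] algebra_simps)
  also have "\<dots> \<le> exp (- l) * (1 + exp (m * (exp \<mu> - 1) - (\<mu> - l) * k))"
    using truncated_binomial_pmf_mgf_le[OF p _ \<open>l \<le> \<mu>\<close> order_refl, where n = n and k = k] l
    by (intro mult_left_mono) (auto simp: m_def)
  also have "\<dots> \<le> exp (- l) * (1 + exp (- x))"
    using exponent by simp
  also have "\<dots> \<le> exp (- l / 2)"
    using exp_neg_mult_one_plus_exp_neg_le[OF l(1) x] .
  finally show ?thesis .
qed

lemma finite_set_pmf_Xlaw:
  assumes "0 \<le> d" "d \<le> real n"
  shows "finite (set_pmf (Xlaw n d q L i))"
proof -
  have "d / real n \<in> {0..1}"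
    using assms by (cases "n = 0") (auto simp: divide_le_eq)
  then have "finite (set_pmf (binomial_pmf n (d / real n)))"
    by auto
  then show ?thesis
    by (simp add: Xlaw_def)
qed

lemma Xlaw_initial_mgf_le:
  assumes "i \<le> L" and "0 < d" "d \<le> real n" and "0 \<le> l"
  shows "measure_pmf.expectation (Xlaw n d q L i) (\<lambda>x. exp (l * (real x - 1))) \<le> exp (d * (exp l - 1))"
proof -
  have p: "d / real n \<in> {0..1}" and np: "real n * (d / real n) = d"
    using assms by auto
  have "measure_pmf.expectation (Xlaw n d q L i) (\<lambda>x. exp (l * (real x - 1)))
      = exp (- l) * measure_pmf.expectation (binomial_pmf n (d / real n)) (\<lambda>x. exp (l * real x))"
    using assms(1) by (simp add: Xlaw_def flip: integral_mult_right_zero add: exp_add[symmetric] algebra_simps)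
  also have "\<dots> \<le> 1 * exp (d * (exp l - 1))"
    using binomial_pmf_mgf_le[OF p, of n l] assms(4) np by (intro mult_mono) auto
  finally show ?thesis by simp
qed

lemma Xlaw_tail_mgf_le:
  assumes "L < i" and "d \<le> real n" and \<delta>: "0 < \<delta>" "\<delta> \<le> 1"
    and l: "l > 0" "l * (1 + \<delta>) \<le> \<delta>\<^sup>2 / 8"
    and "16 / (\<delta>\<^sup>2 * l) \<le> d" and "(1 + \<delta>) * d \<le> (real q - 5) / 2"
  shows "measure_pmf.expectation (Xlaw n d q L i) (\<lambda>x. exp (l * (real x - 1))) \<le> exp (- l / 2)"
proof -
  have "0 < 16 / (\<delta>\<^sup>2 * l)"
    using \<delta> l by simp
  then have "0 < d" "d \<le> real n"
    using assms by linarith+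
  then have p: "d / real n \<in> {0..1}" and np: "real n * (d / real n) = d"
    by auto
  show ?thesis
    using truncated_binomial_pmf_step_mgf_le[OF p \<delta> l, where n = n and k = "(real q - 5) / 2", unfolded np]
      assms by (simp add: Xlaw_def)
qed

lemma Ylaw_nonneg_prob_le:
  assumes "d \<le> real n" and \<delta>: "0 < \<delta>" "\<delta> \<le> 1"
    and l: "l > 0" "l * (1 + \<delta>) \<le> \<delta>\<^sup>2 / 8"
    and d_large: "16 / (\<delta>\<^sup>2 * l) \<le> d" and q: "(1 + \<delta>) * d \<le> (real q - 5) / 2"
  shows "measure_pmf.prob (Ylaw n d q L t) {y. y \<ge> 0}
           \<le> exp (- (l / 2) * real t + (l + d * (exp l - 1) + l / 2) * real L)"
proof -
  define E where "E i = measure_pmf.expectation (Xlaw n d q L i) (\<lambda>x. exp (l * (real x - 1)))" for i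
  have "0 < 16 / (\<delta>\<^sup>2 * l)"
    using \<delta> l by simp
  then have "0 < d"
    using d_large by linarith
  then have b: "0 \<le> d * (exp l - 1) + l / 2"
    using l by simp
  have "E i \<le> exp (- (l / 2) + (if i \<le> L then d * (exp l - 1) + l / 2 else 0))" for i
    using Xlaw_initial_mgf_le[OF _ \<open>0 < d\<close> assms(1), of i L l q] l(1)
      Xlaw_tail_mgf_le[OF _ assms(1) \<delta> l d_large q, of L i]
    by (cases "i \<le> L") (auto simp: E_def)
  moreover have "0 \<le> E i" for i
    unfolding E_def by (intro integral_nonneg_AE AE_pmfI) auto
  ultimately have prod: "(\<Prod>i\<in>{1..t}. E i) \<le> exp (- (l / 2) * real t + (d * (exp l - 1) + l / 2) * real L)"
    using b by (intro prod_le_exp_initial_segment) auto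
  have "measure_pmf.prob (Ylaw n d q L t) {y. y \<ge> 0}
      = measure_pmf.prob (Pi_pmf {1..t} 0 (Xlaw n d q L)) {X. real L + (\<Sum>i\<in>{1..t}. real (X i) - 1) \<ge> 0}"
  proof -
    have "(0 \<le> int L + (\<Sum>i\<in>{1..t}. int (X i) - 1)) \<longleftrightarrow> (0 \<le> real L + (\<Sum>i\<in>{1..t}. real (X i) - 1))"
      for X :: "nat \<Rightarrow> nat"
    proof -
      have "(0 \<le> int L + (\<Sum>i\<in>{1..t}. int (X i) - 1))
          \<longleftrightarrow> (0 \<le> real_of_int (int L + (\<Sum>i\<in>{1..t}. int (X i) - 1)))"
        by (rule of_int_0_le_iff[symmetric])
      also have "real_of_int (int L + (\<Sum>i\<in>{1..t}. int (X i) - 1)) = real L + (\<Sum>i\<in>{1..t}. real (X i) - 1)"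
        by simp
      finally show ?thesis .
    qed
    then show ?thesis
      unfolding Ylaw_def measure_map_pmf vimage_def by simp
  qed
  also have "\<dots> \<le> exp (l * real L) * (\<Prod>i\<in>{1..t}. E i)"
    unfolding E_def using l \<open>0 < d\<close> assms(1)
    by (intro Pi_pmf_prob_sum_nonneg_le finite_set_pmf_Xlaw) auto
  also have "\<dots> \<le> exp (l * real L) * exp (- (l / 2) * real t + (d * (exp l - 1) + l / 2) * real L)"
    using prod by simp
  also have "\<dots> = exp (- (l / 2) * real t + (l + d * (exp l - 1) + l / 2) * real L)"
    by (simp add: exp_add[symmetric] algebra_simps)
  finally show ?thesis .
qed

theorem mainTheorem16:
  fixes \<epsilon> :: real
  assumes "\<epsilon> > 0"
  shows "\<exists>d0::real. \<forall>d::real. d \<ge> d0 \<longrightarrow>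
           (\<exists>C1>0. \<exists>C2>0. \<forall>q::nat. real q \<ge> (2 + \<epsilon>) * d \<longrightarrow>
              (\<forall>(n::nat) (L::nat) (t::nat). real n \<ge> d \<and> L \<ge> 1 \<longrightarrow>
                 measure_pmf.prob (Ylaw n d q L t) {y. y \<ge> 0}
                   \<le> exp (- C1 * real t + C2 * real L)))"
proof -
  define \<delta> where "\<delta> = min (\<epsilon> / 4) 1"
  define l where "l = \<delta>\<^sup>2 / 16"
  have \<delta>: "0 < \<delta>" "\<delta> \<le> 1" "\<delta> \<le> \<epsilon> / 4"
    using assms by (auto simp: \<delta>_def)
  have l: "l > 0" "l * (1 + \<delta>) \<le> \<delta>\<^sup>2 / 8"
    using \<delta> by (auto simp: l_def)
  show ?thesis
  proof (rule exI[of _ "max (10 / \<epsilon>) (16 / (\<delta>\<^sup>2 * l))"], intro allI impI)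
    fix d :: real
    assume "max (10 / \<epsilon>) (16 / (\<delta>\<^sup>2 * l)) \<le> d"
    then have d_large: "16 / (\<delta>\<^sup>2 * l) \<le> d" and "10 \<le> \<epsilon> * d"
      using assms by (auto simp: divide_le_eq mult.commute)
    then have "0 < d"
      using assms by (smt (verit) mult_nonneg_nonpos)
    have "\<delta> * d \<le> \<epsilon> / 4 * d"
      using \<delta> \<open>0 < d\<close> by (intro mult_right_mono) auto
    then have q: "(1 + \<delta>) * d \<le> (real q - 5) / 2" if "(2 + \<epsilon>) * d \<le> real q" for q :: nat
      using that \<open>10 \<le> \<epsilon> * d\<close> by (simp add: algebra_simps)
    have "0 < l + d * (exp l - 1) + l / 2"
      using l \<open>0 < d\<close> by (simp add: add_pos_nonneg)
    then show "\<exists>C1>0. \<exists>C2>0. \<forall>q::nat. real q \<ge> (2 + \<epsilon>) * d \<longrightarrow>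
              (\<forall>(n::nat) (L::nat) (t::nat). real n \<ge> d \<and> L \<ge> 1 \<longrightarrow>
                 measure_pmf.prob (Ylaw n d q L t) {y. y \<ge> 0}
                   \<le> exp (- C1 * real t + C2 * real L))"
      using Ylaw_nonneg_prob_le[OF _ \<delta>(1,2) l d_large q] l by (intro exI[of _ "l / 2"]) auto
  qed
qed

end
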